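(* Fix $A\in\mathbb R$, $T>0$ and $b\ge0$. There is a constant $C=C(A,b,T)$, not depending on $\epsilon$, such that for all sufficiently small $\epsilon>0$, all $t\in[0,\epsilon^{-2}T]$ and all $x,y\in\mathbb Z_{\ge0}$, $$\mathbf p_t^R(x,y)\le C\,(1\wedge t^{-1/2})\,e^{-b|x-y|(1\wedge t^{-1/2})}.$$
   Context: Let $p_t(x)$, $x\in\mathbb Z$, denote the whole-line semi-discrete heat kernel, i.e. the solution of $\partial_tp_t(x)=\frac12\Delta p_t(x)$, $p_0(x)=1_{\{x=0\}}$, where $\Delta f(x)=f(x+1)+f(x-1)-2f(x)$. For $\epsilon>0$ let $\mu_A=1-A\epsilon$. The half-line Robin heat kernel is, for $t\ge0$ and $x,y\in\mathbb Z_{\ge0}$, $$\mathbf p_t^R(x,y)=p_t(x-y)+\mu_Ap_t(x+y+1)+(1-\mu_A^{-2})\sum_{z=2}^\infty p_t(x+y+z)\mu_A^z;$$ it is the fundamental solution of $\partial_t\mathbf p=\frac12\Delta\mathbf p$ on $\mathbb Z_{\ge0}$ with boundary condition $\mathbf p_t^R(-1,y)=\mu_A\mathbf p_t^R(0,y)$. *)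

theory Defs
  imports "HOL-Analysis.Analysis"
begin

definition srw_prob :: "nat \<Rightarrow> int \<Rightarrow> real" where
  "srw_prob n x = (if \<bar>x\<bar> \<le> int n \<and> even (int n + x)
      then real (n choose nat ((int n + x) div 2)) / 2 ^ n else 0)"

text \<open>Whole-line semi-discrete heat kernel: solution of
  d/dt p = (1/2) Laplacian p, p_0 = indicator of 0.  It is the transition kernel of
  continuous-time simple random walk with jump rate 1/2 in each direction, i.e.
  the Poisson(t) mixture of the discrete-time walk.\<close>
definition heat_kernel :: "real \<Rightarrow> int \<Rightarrow> real" where
  "heat_kernel t x = (\<Sum>n. exp (- t) * t ^ n / fact n * srw_prob n x)"

definition muA :: "real \<Rightarrow> real \<Rightarrow> real" where
  "muA A \<epsilon> = 1 - A * \<epsilon>"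

text \<open>Half-line Robin heat kernel; the sum over z \<ge> 2 is reindexed as z = k + 2.\<close>
definition robin_kernel :: "real \<Rightarrow> real \<Rightarrow> real \<Rightarrow> nat \<Rightarrow> nat \<Rightarrow> real" where
  "robin_kernel A \<epsilon> t x y =
     heat_kernel t (int x - int y)
     + muA A \<epsilon> * heat_kernel t (int x + int y + 1)
     + (1 - (muA A \<epsilon>) powi (-2)) *
         (\<Sum>k. heat_kernel t (int x + int y + int k + 2) * (muA A \<epsilon>) ^ (k + 2))"

text \<open>1 \<and> t^(-1/2), with the convention that it equals 1 at t = 0.\<close>
definition min1_invsqrt :: "real \<Rightarrow> real" where
  "min1_invsqrt t = (if t \<le> 1 then 1 else 1 / sqrt t)"

end

theory Submission
  imports Defs
begin

text \<open>
The heat kernel is the Poisson(t) mixture of the n-step probabilities of simple random walk, and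
the core estimate is the local bound
  P(S_n = z) \<le> 4 sqrt 2 cosh(l)^n (n+1)^(-1/2) e^(-l|z|/2)  for all l \<ge> 0.
It comes from splitting n = n1 + n2 in Vandermonde's identity: in each product of two binomial
coefficients the tilt e^(l|z|/2) is absorbed by one factor, whose exponential moment is at most
2 (2 cosh l)^n_i, while the other factor is bounded by its maximum 2^m/sqrt(m+1).
Averaging over n with l = 2B when t \<le> 1, and with l = 2B/sqrt t and AM-GM against the Poisson
weights when t > 1, gives p_t(z) \<le> K m e^(-B m |z|) with m = 1 \<and> t^(-1/2).

The first two terms of the Robin kernel are of this form directly. For the series, the choice
B = b + sqrt T (|A| + 1) makes it geometric with ratio at most e^(-\<epsilon>), because t \<le> T/\<epsilon>^2 means
\<epsilon> \<le> sqrt T m; the resulting factor 2/\<epsilon> is cancelled by the prefactor 1 - \<mu>^(-2) = O(\<epsilon>).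
\<close>

lemma central_binomial_Suc:
  "real (2 * Suc r choose Suc r) * (r + 1) = 2 * (2 * r + 1) * real (2 * r choose r)"
proof -
  have sym: "Suc (2 * r) choose Suc r = Suc (2 * r) choose r"
    using binomial_symmetric[of "Suc r" "Suc (2 * r)"] by simp
  have "2 * Suc r choose Suc r = 2 * (Suc (2 * r) choose r)"
    using sym by simp
  moreover have "Suc (2 * r) * (2 * r choose r) = (Suc (2 * r) choose r) * Suc r"
    using Suc_times_binomial_eq[of "2 * r" r] sym by simp
  ultimately have "(2 * Suc r choose Suc r) * Suc r = 2 * Suc (2 * r) * (2 * r choose r)"
    by (simp only: mult.assoc)
  from arg_cong[OF this, of real] show ?thesis
    by (simp del: binomial_Suc_Suc add: algebra_simps)
qed

lemma central_binomial_sq_le: "real (2 * r choose r)^2 * (2 * r + 1) \<le> 16^r"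
proof (induction r)
  case 0
  then show ?case by simp
next
  case (Suc r)
  define c where "c = real (2 * r choose r)"
  define d where "d = real (2 * Suc r choose Suc r)"
  have "d^2 * (2 * real (Suc r) + 1) * (real r + 1)^2 = (d * (real r + 1))^2 * (2 * real r + 3)"
    by (simp add: power2_eq_square algebra_simps)
  also have "\<dots> = (2 * (2 * real r + 1) * c)^2 * (2 * real r + 3)"
    unfolding central_binomial_Suc c_def d_def ..
  also have "\<dots> = 4 * ((2 * real r + 1) * (2 * real r + 3)) * (c^2 * (2 * real r + 1))"
    by (simp add: power2_eq_square algebra_simps)
  also have "\<dots> \<le> 4 * (4 * (real r + 1)^2) * (c^2 * (2 * real r + 1))"
    by (rule mult_right_mono) (simp add: power2_eq_square algebra_simps, simp)
  also have "\<dots> \<le> 16 * 16^r * (real r + 1)^2"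
  proof -
    have "c^2 * (2 * real r + 1) \<le> 16^r"
      using Suc.IH unfolding c_def by (simp add: add.commute)
    from mult_left_mono[OF this, of "16 * (real r + 1)^2"] show ?thesis
      by (simp add: algebra_simps)
  qed
  finally show ?case
    unfolding d_def by (simp add: mult_le_cancel_right del: binomial_Suc_Suc)
qed

lemma binomial_sq_le: "real (m choose j)^2 * (m + 1) \<le> 4^m"
proof -
  have "real (m choose j)^2 * (m + 1) \<le> real (m choose (m div 2))^2 * (m + 1)"
    using binomial_maximum[of m j] by (intro mult_right_mono power_mono) auto
  also have "\<dots> \<le> 4^m"
  proof (cases "even m")
    case True
    then obtain r where r: "m = 2 * r" by blast
    have "(4::real)^m = 16^r" unfolding r by (simp add: power_mult)
    then show ?thesis using central_binomial_sq_le[of r] r by simp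
  next
    case False
    then obtain r where r: "m = 2 * r + 1" using oddE by blast
    have "2 * Suc r choose Suc r = 2 * (m choose r)"
      using binomial_symmetric[of "Suc r" m] r by simp
    then have "real (m choose (m div 2))^2 * (m + 1)
        = real (2 * Suc r choose Suc r)^2 * (2 * Suc r + 1) / 4 - real (m choose r)^2"
      using r by (simp add: power2_eq_square algebra_simps del: binomial_Suc_Suc)
    also have "\<dots> \<le> 16^Suc r / 4"
      using central_binomial_sq_le[of "Suc r"] zero_le_power2[of "real (m choose r)"]
      by linarith
    also have "\<dots> = 4^m"
      unfolding r by (simp add: power_mult)
    finally show ?thesis .
  qed
  finally show ?thesis .
qed

lemma binomial_le_pow2_div_sqrt: "real (m choose j) \<le> 2^m / sqrt (m + 1)"
proof -
  have "real (m choose j) * sqrt (m + 1) = sqrt (real (m choose j)^2 * (m + 1))"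
    by (simp add: real_sqrt_mult)
  also have "\<dots> \<le> sqrt (2^m * 2^m)"
    using binomial_sq_le[of m j] by (simp flip: power_mult_distrib)
  finally show ?thesis
    by (simp add: field_simps)
qed

lemma exp_le_exp_add_exp: "a \<le> max u v \<Longrightarrow> exp a \<le> exp u + exp (v::real)"
  by (cases "u \<le> v") (auto intro: add_increasing add_increasing2 order.trans [of _ "exp _"])

lemma sum_binomial_exp_eq_cosh_power:
  "(\<Sum>i\<le>m. real (m choose i) * exp (l * (2 * real i - real m))) = (2 * cosh l)^m"
proof -
  have "2 * cosh l = exp l + exp (- l)"
    by (simp add: cosh_field_def)
  then have "(2 * cosh l)^m = (exp l + exp (- l))^m"
    by simp
  also have "\<dots> = (\<Sum>i\<le>m. real (m choose i) * exp l ^ i * exp (- l) ^ (m - i))"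
    by (rule binomial_ring)
  also have "\<dots> = (\<Sum>i\<le>m. real (m choose i) * exp (l * (2 * real i - real m)))"
    by (intro sum.cong refl)
      (simp add: exp_of_nat_mult [symmetric] exp_add [symmetric] of_nat_diff algebra_simps)
  finally show ?thesis ..
qed

lemma sum_binomial_exp_abs_le:
  "(\<Sum>i\<le>N. real (m choose i) * exp (l * \<bar>2 * real i - real m\<bar>)) \<le> 2 * (2 * cosh l)^m"
proof -
  define g where "g i = real (m choose i) * (exp (l * (2 * real i - real m)) + exp (- l * (2 * real i - real m)))" for i
  have "l * \<bar>x\<bar> \<le> max (l * x) (- l * x)" for x
    by (cases "0 \<le> x") (simp_all add: le_max_iff_disj)
  then have "(\<Sum>i\<le>N. real (m choose i) * exp (l * \<bar>2 * real i - real m\<bar>)) \<le> (\<Sum>i\<le>N. g i)"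
    unfolding g_def by (intro sum_mono mult_left_mono exp_le_exp_add_exp) auto
  also have "\<dots> \<le> (\<Sum>i\<le>max N m. g i)"
    by (rule sum_mono2) (auto simp: g_def)
  also have "\<dots> = (\<Sum>i\<le>m. g i)"
    by (rule sum.mono_neutral_right) (auto simp: g_def)
  also have "\<dots> = (2 * cosh l)^m + (2 * cosh (- l))^m"
    unfolding g_def distrib_left sum.distrib sum_binomial_exp_eq_cosh_power ..
  finally show ?thesis
    by (simp add: mult.commute)
qed

lemma binomial_exp_abs_split_le:
  fixes l M1 M2 :: real
  assumes n: "n = n1 + n2" and l: "0 \<le> l"
    and M1: "\<And>j. real (n1 choose j) \<le> M1" and M2: "\<And>j. real (n2 choose j) \<le> M2"
  shows "real (n choose k) * exp (l * \<bar>2 * real k - real n\<bar> / 2)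
          \<le> 2 * (2 * cosh l)^n1 * M2 + 2 * (2 * cosh l)^n2 * M1"
proof -
  define e1 where "e1 j = exp (l * \<bar>2 * real j - real n1\<bar>)" for j
  define e2 where "e2 j = exp (l * \<bar>2 * real j - real n2\<bar>)" for j
  have tilt_split: "exp (l * \<bar>2 * real k - real n\<bar> / 2) \<le> e1 j + e2 (k - j)" if "j \<le> k" for j
  proof -
    have "\<bar>2 * real k - real n\<bar> \<le> \<bar>2 * real j - real n1\<bar> + \<bar>2 * real (k - j) - real n2\<bar>"
      using that n by (simp add: of_nat_diff)
    from mult_left_mono[OF this l] show ?thesis
      unfolding e1_def e2_def by (intro exp_le_exp_add_exp) (simp add: distrib_left)
  qed
  have "real (n choose k) * exp (l * \<bar>2 * real k - real n\<bar> / 2)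
      = (\<Sum>j\<le>k. real (n1 choose j) * real (n2 choose (k - j)) * exp (l * \<bar>2 * real k - real n\<bar> / 2))"
    unfolding n vandermonde [symmetric] of_nat_sum sum_distrib_right by simp
  also have "\<dots> \<le> (\<Sum>j\<le>k. real (n1 choose j) * real (n2 choose (k - j)) * (e1 j + e2 (k - j)))"
    by (intro sum_mono mult_left_mono tilt_split) auto
  also have "\<dots> = (\<Sum>j\<le>k. real (n1 choose j) * e1 j * real (n2 choose (k - j)))
               + (\<Sum>j\<le>k. real (n2 choose (k - j)) * e2 (k - j) * real (n1 choose j))"
    by (simp add: sum.distrib [symmetric] algebra_simps)
  also have "\<dots> \<le> (\<Sum>j\<le>k. real (n1 choose j) * e1 j) * M2 + (\<Sum>j\<le>k. real (n2 choose (k - j)) * e2 (k - j)) * M1"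
    unfolding sum_distrib_right
    by (intro add_mono sum_mono mult_left_mono M1 M2) (auto simp: e1_def e2_def)
  also have "(\<Sum>j\<le>k. real (n2 choose (k - j)) * e2 (k - j)) = (\<Sum>i\<le>k. real (n2 choose i) * e2 i)"
    using sum.atLeastAtMost_rev[of "\<lambda>i. real (n2 choose i) * e2 i" 0 k] by (simp add: atLeast0AtMost)
  also have "(\<Sum>j\<le>k. real (n1 choose j) * e1 j) * M2 + (\<Sum>i\<le>k. real (n2 choose i) * e2 i) * M1
      \<le> 2 * (2 * cosh l)^n1 * M2 + 2 * (2 * cosh l)^n2 * M1"
    unfolding e1_def e2_def using M1[of 0] M2[of 0]
    by (intro add_mono mult_right_mono sum_binomial_exp_abs_le) auto
  finally show ?thesis .
qed

lemma binomial_exp_abs_le: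
  fixes l :: real
  assumes "0 \<le> l"
  shows "real (n choose k) * exp (l * \<bar>2 * real k - real n\<bar> / 2)
          \<le> 4 * sqrt 2 * 2^n * cosh l ^ n / sqrt (real n + 1)"
proof -
  define n1 where "n1 = n div 2"
  define n2 where "n2 = n - n1"
  have half_bound: "real (m choose j) \<le> sqrt 2 * 2^m / sqrt (real n + 1)"
    if "n + 1 \<le> 2 * (m + 1)" for m j
  proof -
    have "sqrt (real n + 1) \<le> sqrt 2 * sqrt (real m + 1)"
      using that by (simp flip: real_sqrt_mult)
    then have "2^m / sqrt (real m + 1) \<le> sqrt 2 * 2^m / sqrt (real n + 1)"
      by (simp add: field_simps)
    with binomial_le_pow2_div_sqrt[of m j] show ?thesis
      by (simp add: add.commute)
  qed
  have two_pow: "(2::real)^n1 * 2^n2 = 2^n"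
    unfolding n1_def n2_def by (simp flip: power_add)
  have cosh_pow: "cosh l ^ n1 \<le> cosh l ^ n" "cosh l ^ n2 \<le> cosh l ^ n"
    unfolding n1_def n2_def by (intro power_increasing; simp add: cosh_real_ge_1)+
  have "real (n choose k) * exp (l * \<bar>2 * real k - real n\<bar> / 2)
      \<le> 2 * (2 * cosh l)^n1 * (sqrt 2 * 2^n2 / sqrt (real n + 1))
        + 2 * (2 * cosh l)^n2 * (sqrt 2 * 2^n1 / sqrt (real n + 1))"
    using assms by (intro binomial_exp_abs_split_le half_bound) (auto simp: n1_def n2_def)
  also have "\<dots> = 2 * sqrt 2 * 2^n * (cosh l ^ n1 + cosh l ^ n2) / sqrt (real n + 1)"
    unfolding power_mult_distrib two_pow [symmetric] by (simp add: field_simps)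
  also have "\<dots> \<le> 2 * sqrt 2 * 2^n * (cosh l ^ n + cosh l ^ n) / sqrt (real n + 1)"
    using cosh_pow by (intro divide_right_mono mult_left_mono add_mono) auto
  finally show ?thesis
    by simp
qed

lemma srw_prob_nonneg: "0 \<le> srw_prob n z"
  unfolding srw_prob_def by simp

lemma srw_prob_le_one: "srw_prob n z \<le> 1"
  unfolding srw_prob_def using binomial_le_pow2 by (simp add: divide_le_eq_1)

lemma srw_prob_le_exp_decay:
  assumes "0 \<le> l"
  shows "srw_prob n z \<le> 4 * sqrt 2 * cosh l ^ n / sqrt (real n + 1) * exp (- l * \<bar>real_of_int z\<bar> / 2)"
proof (cases "\<bar>z\<bar> \<le> int n \<and> even (int n + z)")
  case False
  then have "srw_prob n z = 0"
    unfolding srw_prob_def by (rule if_not_P)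
  then show ?thesis
    using cosh_real_ge_1[of l] by simp
next
  case True
  define k where "k = nat ((int n + z) div 2)"
  have "2 * int k = int n + z"
    using True unfolding k_def by auto
  from arg_cong [OF this, of real_of_int] have z: "real_of_int z = 2 * real k - real n"
    by simp
  have "real (n choose k) * exp (l * \<bar>real_of_int z\<bar> / 2) \<le> 4 * sqrt 2 * 2^n * cosh l ^ n / sqrt (real n + 1)"
    unfolding z using assms by (rule binomial_exp_abs_le)
  then have "real (n choose k) / 2^n \<le> 4 * sqrt 2 * cosh l ^ n / sqrt (real n + 1) * exp (- l * \<bar>real_of_int z\<bar> / 2)"
    by (simp add: exp_minus field_simps)
  moreover have "srw_prob n z = real (n choose k) / 2^n"
    using True unfolding srw_prob_def k_def by simp
  ultimately show ?thesis
    by simp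
qed

lemma sums_exp_real: "(\<lambda>n. x ^ n / fact n) sums exp (x::real)"
  using exp_converges[of x] by (simp add: divide_inverse mult.commute)

definition poisson_weight :: "real \<Rightarrow> nat \<Rightarrow> real" where
  "poisson_weight t n = exp (- t) * t ^ n / fact n"

lemma poisson_weight_nonneg: "0 \<le> t \<Longrightarrow> 0 \<le> poisson_weight t n"
  unfolding poisson_weight_def by simp

lemma sums_poisson_weight_power: "(\<lambda>n. poisson_weight t n * c ^ n) sums exp (t * (c - 1))"
proof -
  have "(\<lambda>n. exp (- t) * ((t * c) ^ n / fact n)) sums (exp (- t) * exp (t * c))"
    by (intro sums_mult sums_exp_real)
  then show ?thesis
    unfolding poisson_weight_def by (simp add: power_mult_distrib algebra_simps flip: exp_add)
qed

lemma sums_poisson_weight_div_Suc: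
  assumes "t \<noteq> 0"
  shows "(\<lambda>n. poisson_weight t n / (real n + 1)) sums ((1 - exp (- t)) / t)"
proof -
  have "(\<lambda>n. t ^ Suc n / fact (Suc n)) sums (exp t - 1)"
    using sums_exp_real[of t] sums_Suc_iff[of "\<lambda>n. t ^ n / fact n" "exp t - 1"] by simp
  from sums_mult[OF this, of "exp (- t) / t"] show ?thesis
    using assms unfolding poisson_weight_def by (simp add: field_simps exp_minus)
qed

lemma heat_kernel_sums:
  assumes "0 \<le> t"
  shows "(\<lambda>n. poisson_weight t n * srw_prob n z) sums heat_kernel t z"
proof -
  have "summable (\<lambda>n. poisson_weight t n * 1 ^ n)"
    using sums_poisson_weight_power by (rule sums_summable)
  then have "summable (\<lambda>n. poisson_weight t n * srw_prob n z)"
    by (rule summable_comparison_test')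
      (simp add: assms poisson_weight_nonneg srw_prob_nonneg srw_prob_le_one mult_left_le)
  then show ?thesis
    unfolding heat_kernel_def poisson_weight_def [symmetric] by (rule summable_sums)
qed

lemma heat_kernel_nonneg:
  assumes "0 \<le> t"
  shows "0 \<le> heat_kernel t z"
  by (rule sums_le [OF _ sums_zero heat_kernel_sums [OF assms]])
    (simp add: assms poisson_weight_nonneg srw_prob_nonneg)

lemma heat_kernel_le_sums:
  assumes "0 \<le> t" and "\<And>n. srw_prob n z \<le> u n" and "(\<lambda>n. poisson_weight t n * u n) sums S"
  shows "heat_kernel t z \<le> S"
  by (rule sums_le [OF _ heat_kernel_sums [OF assms(1)] assms(3)])
    (use assms(1,2) in \<open>simp add: mult_left_mono poisson_weight_nonneg\<close>)

lemma heat_kernel_le_exp_cosh: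
  assumes "0 \<le> t" and "0 \<le> l"
  shows "heat_kernel t z \<le> 4 * sqrt 2 * exp (- l * \<bar>real_of_int z\<bar> / 2) * exp (t * (cosh l - 1))"
proof (rule heat_kernel_le_sums [OF assms(1)])
  fix n
  have "cosh l ^ n / sqrt (real n + 1) \<le> cosh l ^ n"
    using divide_left_mono[of 1 "sqrt (real n + 1)" "cosh l ^ n"] cosh_real_pos[of l] by simp
  then have "4 * sqrt 2 * (cosh l ^ n / sqrt (real n + 1)) * exp (- l * \<bar>real_of_int z\<bar> / 2)
      \<le> 4 * sqrt 2 * cosh l ^ n * exp (- l * \<bar>real_of_int z\<bar> / 2)"
    by (intro mult_right_mono mult_left_mono) auto
  with srw_prob_le_exp_decay[OF assms(2), of n z]
  show "srw_prob n z \<le> 4 * sqrt 2 * exp (- l * \<bar>real_of_int z\<bar> / 2) * cosh l ^ n"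
    by (simp add: mult_ac)
  show "(\<lambda>n. poisson_weight t n * (4 * sqrt 2 * exp (- l * \<bar>real_of_int z\<bar> / 2) * cosh l ^ n))
      sums (4 * sqrt 2 * exp (- l * \<bar>real_of_int z\<bar> / 2) * exp (t * (cosh l - 1)))"
    using sums_mult [OF sums_poisson_weight_power [of t "cosh l"], of "4 * sqrt 2 * exp (- l * \<bar>real_of_int z\<bar> / 2)"]
    by (simp add: algebra_simps)
qed

lemma two_mult_le_scaled_squares:
  fixes x y s :: real
  assumes "0 < s"
  shows "2 * x * y \<le> s * x^2 + y^2 / s"
  using sum_squares_bound[of "sqrt s * x" "y / sqrt s"] assms
  by (simp add: power_mult_distrib power_divide)

lemma srw_prob_le_am_gm:
  assumes "0 < s" and "0 \<le> l"
  shows "srw_prob n z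
    \<le> 4 * sqrt 2 * exp (- l * \<bar>real_of_int z\<bar> / 2) * ((s / (real n + 1) + (cosh l ^ 2) ^ n / s) / 2)"
proof -
  have "2 * (1 / sqrt (real n + 1)) * cosh l ^ n \<le> s * (1 / sqrt (real n + 1))^2 + (cosh l ^ n)^2 / s"
    using assms by (intro two_mult_le_scaled_squares) simp
  then have "cosh l ^ n / sqrt (real n + 1) \<le> (s / (real n + 1) + (cosh l ^ 2) ^ n / s) / 2"
    by (simp add: power_divide mult.commute flip: power_mult)
  from mult_left_mono [OF this, of "4 * sqrt 2 * exp (- l * \<bar>real_of_int z\<bar> / 2)"]
    srw_prob_le_exp_decay [OF assms(2), of n z]
  show ?thesis
    by (simp add: mult_ac)
qed

lemma heat_kernel_le_exp_sinh_sq: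
  assumes "0 < t" and "0 \<le> l"
  shows "heat_kernel t z \<le> 4 * sqrt 2 * exp (- l * \<bar>real_of_int z\<bar> / 2) * (1 + exp (t * sinh l ^ 2)) / (2 * sqrt t)"
proof -
  define E where "E = 4 * sqrt 2 * exp (- l * \<bar>real_of_int z\<bar> / 2)"
  have per_term: "srw_prob n z \<le> E * ((sqrt t / (real n + 1) + (cosh l ^ 2) ^ n / sqrt t) / 2)" for n
    unfolding E_def using assms by (intro srw_prob_le_am_gm) auto
  have series: "(\<lambda>n. poisson_weight t n * (E * ((sqrt t / (real n + 1) + (cosh l ^ 2) ^ n / sqrt t) / 2)))
      sums (E * ((sqrt t * ((1 - exp (- t)) / t) + exp (t * (cosh l ^ 2 - 1)) / sqrt t) / 2))"
  proof -
    have "poisson_weight t n * (E * ((sqrt t / (real n + 1) + (cosh l ^ 2) ^ n / sqrt t) / 2))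
        = E * ((sqrt t * (poisson_weight t n / (real n + 1)) + poisson_weight t n * (cosh l ^ 2) ^ n / sqrt t) / 2)"
      for n
      by (simp add: algebra_simps)
    then show ?thesis
      using assms
      by (simp only:) (intro sums_mult sums_add sums_divide sums_poisson_weight_power sums_poisson_weight_div_Suc; simp)
  qed
  have "heat_kernel t z \<le> E * ((sqrt t * ((1 - exp (- t)) / t) + exp (t * (cosh l ^ 2 - 1)) / sqrt t) / 2)"
    by (rule heat_kernel_le_sums [OF _ per_term series]) (use assms(1) in simp)
  also have "\<dots> \<le> E * ((1 + exp (t * sinh l ^ 2)) / sqrt t / 2)"
  proof -
    have "sqrt t * ((1 - exp (- t)) / t) = (1 - exp (- t)) / sqrt t"
      using assms(1) by (simp add: field_simps real_sqrt_mult [symmetric])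
    also have "\<dots> \<le> 1 / sqrt t"
      using assms(1) by (intro divide_right_mono) auto
    finally show ?thesis
      unfolding sinh_square_eq E_def by (auto simp: add_divide_distrib intro!: mult_left_mono divide_right_mono)
  qed
  finally show ?thesis
    unfolding E_def by (simp add: field_simps)
qed

lemma sinh_le_mult_cosh:
  fixes x :: real
  assumes "0 \<le> x"
  shows "sinh x \<le> x * cosh x"
proof -
  have "0 * cosh 0 - sinh 0 \<le> x * cosh x - sinh x"
  proof (rule DERIV_nonneg_imp_nondecreasing [OF assms])
    fix y :: real
    assume "0 \<le> y"
    have "((\<lambda>x. x * cosh x - sinh x) has_real_derivative y * sinh y) (at y)"
      by (auto intro!: derivative_eq_intros)
    with \<open>0 \<le> y\<close> show "\<exists>d. ((\<lambda>x. x * cosh x - sinh x) has_real_derivative d) (at y) \<and> 0 \<le> d"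
      by auto
  qed
  then show ?thesis
    by simp
qed

lemma heat_kernel_le_short_time:
  assumes "0 \<le> t" and "t \<le> 1" and "0 \<le> B"
  shows "heat_kernel t z \<le> 4 * sqrt 2 * exp (cosh (2 * B)) * exp (- B * \<bar>real_of_int z\<bar>)"
proof -
  have "t * (cosh (2 * B) - 1) \<le> cosh (2 * B) - 1"
    using assms cosh_real_ge_1[of "2 * B"] by (simp add: mult_left_le_one_le)
  then have "t * (cosh (2 * B) - 1) \<le> cosh (2 * B)"
    by linarith
  have "heat_kernel t z \<le> 4 * sqrt 2 * exp (- (2 * B) * \<bar>real_of_int z\<bar> / 2) * exp (t * (cosh (2 * B) - 1))"
    using assms by (intro heat_kernel_le_exp_cosh) auto
  also have "\<dots> \<le> 4 * sqrt 2 * exp (- (2 * B) * \<bar>real_of_int z\<bar> / 2) * exp (cosh (2 * B))"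
    using \<open>t * (cosh (2 * B) - 1) \<le> cosh (2 * B)\<close> by (intro mult_left_mono) auto
  finally show ?thesis
    by (simp add: mult_ac)
qed

lemma heat_kernel_le_long_time:
  assumes "1 < t" and "0 \<le> B"
  shows "heat_kernel t z
    \<le> 4 * sqrt 2 * exp (4 * B^2 * cosh (2 * B)^2) / sqrt t * exp (- B * \<bar>real_of_int z\<bar> / sqrt t)"
proof -
  define l where "l = 2 * B / sqrt t"
  have l: "0 \<le> l" "l \<le> 2 * B"
    using assms unfolding l_def by (auto simp: divide_le_eq mult_le_cancel_left1)
  have "t * sinh l ^ 2 \<le> t * (l * cosh l) ^ 2"
    using sinh_le_mult_cosh[OF l(1)] l(1) assms(1) by (intro mult_left_mono power_mono) auto
  also have "\<dots> = 4 * B^2 * cosh l ^ 2"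
    using assms(1) unfolding l_def by (simp add: power_mult_distrib power_divide)
  also have "\<dots> \<le> 4 * B^2 * cosh (2 * B) ^ 2"
    using l by (intro mult_left_mono power_mono) (auto simp: cosh_real_nonneg_le_iff)
  finally have "exp (t * sinh l ^ 2) \<le> exp (4 * B^2 * cosh (2 * B) ^ 2)"
    by simp
  moreover have "1 \<le> exp (4 * B^2 * cosh (2 * B) ^ 2)"
    by simp
  ultimately have "1 + exp (t * sinh l ^ 2) \<le> 2 * exp (4 * B^2 * cosh (2 * B) ^ 2)"
    by linarith
  have "heat_kernel t z \<le> 4 * sqrt 2 * exp (- l * \<bar>real_of_int z\<bar> / 2) * (1 + exp (t * sinh l ^ 2)) / (2 * sqrt t)"
    using assms l by (intro heat_kernel_le_exp_sinh_sq) auto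
  also have "\<dots> \<le> 4 * sqrt 2 * exp (- l * \<bar>real_of_int z\<bar> / 2) * (2 * exp (4 * B^2 * cosh (2 * B) ^ 2)) / (2 * sqrt t)"
    using \<open>1 + exp (t * sinh l ^ 2) \<le> _\<close> assms(1) by (intro divide_right_mono mult_left_mono) auto
  finally show ?thesis
    unfolding l_def by (simp add: field_simps)
qed

lemma heat_kernel_le_scaled_exp_decay:
  fixes B :: real
  assumes "0 \<le> B"
  obtains K where "\<And>t z. 0 \<le> t \<Longrightarrow>
           heat_kernel t z \<le> K * min1_invsqrt t * exp (- B * min1_invsqrt t * \<bar>real_of_int z\<bar>)"
proof
  define K where "K = 4 * sqrt 2 * (exp (cosh (2 * B)) + exp (4 * B^2 * cosh (2 * B)^2))"
  fix t :: real and z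
  assume "0 \<le> t"
  show "heat_kernel t z \<le> K * min1_invsqrt t * exp (- B * min1_invsqrt t * \<bar>real_of_int z\<bar>)"
  proof (cases "t \<le> 1")
    case True
    have "4 * sqrt 2 * exp (cosh (2 * B)) \<le> K"
      unfolding K_def by (intro mult_left_mono) auto
    from order.trans [OF heat_kernel_le_short_time [OF \<open>0 \<le> t\<close> True assms] mult_right_mono [OF this]]
    show ?thesis
      using True unfolding min1_invsqrt_def by simp
  next
    case False
    have "4 * sqrt 2 * exp (4 * B^2 * cosh (2 * B)^2) / sqrt t \<le> K / sqrt t"
      unfolding K_def using \<open>0 \<le> t\<close> by (intro divide_right_mono mult_left_mono) auto
    from order.trans [OF heat_kernel_le_long_time [OF _ assms] mult_right_mono [OF this]]
    show ?thesis
      using False \<open>0 \<le> t\<close> unfolding min1_invsqrt_def by (simp add: field_simps)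
  qed
qed

lemma suminf_le_geometric:
  fixes f :: "nat \<Rightarrow> real"
  assumes "\<And>k. 0 \<le> f k" and "\<And>k. f k \<le> D * r ^ k" and "0 \<le> r" and "r < 1"
  shows "summable f" and "suminf f \<le> D / (1 - r)"
proof -
  have geom: "(\<lambda>k. D * r ^ k) sums (D / (1 - r))"
    using assms(3,4) sums_mult [OF geometric_sums, of r D] by (simp add: field_simps)
  show "summable f"
    by (rule summable_comparison_test' [OF sums_summable [OF geom]]) (simp add: assms(1,2))
  then show "suminf f \<le> D / (1 - r)"
    using sums_le [OF assms(2) summable_sums geom] by blast
qed

lemma exp_neg_le_one_minus_half:
  fixes \<epsilon> :: real
  assumes "0 \<le> \<epsilon>" and "\<epsilon> \<le> 1"
  shows "exp (- \<epsilon>) \<le> 1 - \<epsilon> / 2"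
proof -
  have "exp (- \<epsilon>) * (1 + \<epsilon>) \<le> exp (- \<epsilon>) * exp \<epsilon>"
    by (intro mult_left_mono exp_ge_add_one_self) simp
  then have "exp (- \<epsilon>) \<le> 1 / (1 + \<epsilon>)"
    using assms by (simp add: field_simps flip: exp_add)
  also have "\<dots> \<le> 1 - \<epsilon> / 2"
    using assms mult_left_le_one_le [of \<epsilon> \<epsilon>] by (simp add: field_simps)
  finally show ?thesis .
qed

lemma muA_bounds:
  assumes "0 < \<epsilon>" and "\<bar>A\<bar> * \<epsilon> \<le> 1 / 2"
  shows "1 / 2 \<le> muA A \<epsilon>" and "muA A \<epsilon> \<le> 1 + \<bar>A\<bar> * \<epsilon>"
proof -
  have "\<bar>A * \<epsilon>\<bar> = \<bar>A\<bar> * \<epsilon>"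
    using assms(1) by (simp add: abs_mult)
  then show "1 / 2 \<le> muA A \<epsilon>" "muA A \<epsilon> \<le> 1 + \<bar>A\<bar> * \<epsilon>"
    using assms(2) abs_le_D1 [of "A * \<epsilon>"] abs_ge_minus_self [of "A * \<epsilon>"]
    unfolding muA_def by linarith+
qed

lemma abs_one_minus_muA_powi_le:
  assumes "0 < \<epsilon>" and "\<bar>A\<bar> * \<epsilon> \<le> 1 / 2"
  shows "\<bar>1 - muA A \<epsilon> powi (-2)\<bar> * muA A \<epsilon> ^ 2 \<le> 3 * \<bar>A\<bar> * \<epsilon>"
proof -
  have "muA A \<epsilon> \<noteq> 0"
    using muA_bounds(1) [OF assms] by auto
  then have "\<bar>1 - muA A \<epsilon> powi (-2)\<bar> * muA A \<epsilon> ^ 2 = \<bar>muA A \<epsilon> ^ 2 - 1\<bar>"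
    by (simp add: power_int_minus abs_mult [symmetric] field_simps)
  also have "muA A \<epsilon> ^ 2 - 1 = A * \<epsilon> * (A * \<epsilon> - 2)"
    unfolding muA_def by (simp add: power2_eq_square algebra_simps)
  also have "\<bar>A * \<epsilon> * (A * \<epsilon> - 2)\<bar> = \<bar>A\<bar> * \<epsilon> * \<bar>A * \<epsilon> - 2\<bar>"
    using assms(1) by (simp add: abs_mult)
  also have "\<dots> \<le> \<bar>A\<bar> * \<epsilon> * 3"
    using assms abs_le_D1 [of "A * \<epsilon>"] abs_ge_minus_self [of "A * \<epsilon>"] abs_mult [of A \<epsilon>]
    by (intro mult_left_mono) auto
  finally show ?thesis
    by simp
qed

lemma robin_series_le:
  fixes A \<epsilon> D q :: real and g :: "nat \<Rightarrow> real"
  assumes \<epsilon>: "0 < \<epsilon>" "\<epsilon> \<le> 1" "\<bar>A\<bar> * \<epsilon> \<le> 1 / 2"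
    and g: "\<And>k. 0 \<le> g k" "\<And>k. g k \<le> D * q ^ k"
    and q: "0 \<le> q" "q \<le> exp (- (\<bar>A\<bar> + 1) * \<epsilon>)"
  shows "0 \<le> (\<Sum>k. g k * muA A \<epsilon> ^ (k + 2))"
    and "(\<Sum>k. g k * muA A \<epsilon> ^ (k + 2)) \<le> D * muA A \<epsilon> ^ 2 * (2 / \<epsilon>)"
proof -
  define \<mu> where "\<mu> = muA A \<epsilon>"
  define r where "r = \<mu> * q"
  have \<mu>: "1 / 2 \<le> \<mu>" "\<mu> \<le> exp (\<bar>A\<bar> * \<epsilon>)"
    using muA_bounds [OF \<epsilon>(1,3)] exp_ge_add_one_self [of "\<bar>A\<bar> * \<epsilon>"] unfolding \<mu>_def by linarith+
  have "r \<le> exp (\<bar>A\<bar> * \<epsilon>) * exp (- (\<bar>A\<bar> + 1) * \<epsilon>)"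
    unfolding r_def using \<mu> q by (intro mult_mono) auto
  also have "\<dots> = exp (- \<epsilon>)"
    by (simp add: algebra_simps flip: exp_add)
  finally have gap: "\<epsilon> / 2 \<le> 1 - r"
    using exp_neg_le_one_minus_half [of \<epsilon>] \<epsilon> by linarith
  have terms: "0 \<le> g k * \<mu> ^ (k + 2)" "g k * \<mu> ^ (k + 2) \<le> D * \<mu>^2 * r ^ k" for k
  proof -
    show "0 \<le> g k * \<mu> ^ (k + 2)"
      using g(1) \<mu> by simp
    have "g k * \<mu> ^ (k + 2) \<le> D * q ^ k * \<mu> ^ (k + 2)"
      using g(2) \<mu> by (intro mult_right_mono) auto
    then show "g k * \<mu> ^ (k + 2) \<le> D * \<mu>^2 * r ^ k"
      unfolding r_def by (simp add: power_add power_mult_distrib power2_eq_square mult_ac)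
  qed
  have "0 \<le> r"
    unfolding r_def using \<mu> q by simp
  have "r < 1"
    using gap \<epsilon>(1) by linarith
  note geom = suminf_le_geometric [OF terms \<open>0 \<le> r\<close> \<open>r < 1\<close>]
  show "0 \<le> (\<Sum>k. g k * muA A \<epsilon> ^ (k + 2))"
    using geom(1) terms(1) unfolding \<mu>_def by (rule suminf_nonneg)
  have "D * \<mu>^2 / (1 - r) \<le> D * \<mu>^2 / (\<epsilon> / 2)"
    using g(1) [of 0] g(2) [of 0] gap \<epsilon> by (intro divide_left_mono) auto
  with geom(2) show "(\<Sum>k. g k * muA A \<epsilon> ^ (k + 2)) \<le> D * muA A \<epsilon> ^ 2 * (2 / \<epsilon>)"
    unfolding \<mu>_def by simp
qed

lemma robin_tail_le:
  fixes A \<epsilon> D q :: real and g :: "nat \<Rightarrow> real"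
  assumes \<epsilon>: "0 < \<epsilon>" "\<epsilon> \<le> 1" "\<bar>A\<bar> * \<epsilon> \<le> 1 / 2"
    and g: "\<And>k. 0 \<le> g k" "\<And>k. g k \<le> D * q ^ k"
    and q: "0 \<le> q" "q \<le> exp (- (\<bar>A\<bar> + 1) * \<epsilon>)"
  shows "(1 - muA A \<epsilon> powi (-2)) * (\<Sum>k. g k * muA A \<epsilon> ^ (k + 2)) \<le> 6 * \<bar>A\<bar> * D"
proof -
  define \<mu> where "\<mu> = muA A \<epsilon>"
  note series = robin_series_le [OF assms, folded \<mu>_def]
  have D: "0 \<le> D"
    using g(1) [of 0] g(2) [of 0] by simp
  have "(1 - \<mu> powi (-2)) * (\<Sum>k. g k * \<mu> ^ (k + 2)) \<le> \<bar>1 - \<mu> powi (-2)\<bar> * (D * \<mu>^2 * (2 / \<epsilon>))"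
    using series by (intro order.trans [OF mult_right_mono mult_left_mono]) auto
  also have "\<dots> = (\<bar>1 - \<mu> powi (-2)\<bar> * \<mu>^2) * D * (2 / \<epsilon>)"
    by (simp add: mult_ac)
  also have "\<dots> \<le> 3 * \<bar>A\<bar> * \<epsilon> * D * (2 / \<epsilon>)"
    using abs_one_minus_muA_powi_le [OF \<epsilon>(1,3)] D \<epsilon> unfolding \<mu>_def by (intro mult_right_mono) auto
  also have "\<dots> = 6 * \<bar>A\<bar> * D"
    using \<epsilon> by simp
  finally show ?thesis
    unfolding \<mu>_def .
qed

lemma exp_neg_mult_le_split:
  fixes a \<delta> s w z :: real
  assumes "0 \<le> a" "0 \<le> \<delta>" "0 \<le> w" "0 \<le> s" "w + s \<le> z"
  shows "exp (- (a + \<delta>) * z) \<le> exp (- a * w) * exp (- \<delta> * s)"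
proof -
  have "a * w \<le> a * z" "\<delta> * s \<le> \<delta> * z"
    using assms by (intro mult_left_mono; simp)+
  then show ?thesis
    by (simp add: algebra_simps flip: exp_add)
qed

lemma robin_kernel_le:
  fixes A \<epsilon> t a \<delta> M :: real
  assumes t: "0 \<le> t" and \<epsilon>: "0 < \<epsilon>" "\<epsilon> \<le> 1" "\<bar>A\<bar> * \<epsilon> \<le> 1 / 2"
    and a: "0 \<le> a" and \<delta>: "(\<bar>A\<bar> + 1) * \<epsilon> \<le> \<delta>"
    and hk: "\<And>z. heat_kernel t z \<le> M * exp (- (a + \<delta>) * \<bar>real_of_int z\<bar>)"
  shows "robin_kernel A \<epsilon> t x y \<le> (3 + 6 * \<bar>A\<bar>) * M * exp (- a * \<bar>real x - real y\<bar>)"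
proof -
  define E where "E = exp (- a * \<bar>real x - real y\<bar>)"
  have "0 \<le> (\<bar>A\<bar> + 1) * \<epsilon>"
    using \<epsilon> by simp
  with \<delta> have \<delta>0: "0 \<le> \<delta>"
    by linarith
  have M: "0 \<le> M"
    using heat_kernel_nonneg [OF t, of 0] hk [of 0] by simp
  have decay: "heat_kernel t z \<le> M * E * exp (- \<delta> * s)"
    if "\<bar>real x - real y\<bar> + s \<le> \<bar>real_of_int z\<bar>" "0 \<le> s" for z s
    using hk [of z] mult_left_mono [OF exp_neg_mult_le_split [OF a \<delta>0 abs_ge_zero that(2,1)] M]
    unfolding E_def by (simp add: mult.assoc)
  have T1: "heat_kernel t (int x - int y) \<le> M * E"
    using decay [of 0] by simp
  have "muA A \<epsilon> \<le> 2"
    using muA_bounds(2) [OF \<epsilon>(1,3)] \<epsilon>(3) by linarith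
  moreover have "heat_kernel t (int x + int y + 1) \<le> M * E"
    using decay [of 0] by simp
  ultimately have T2: "muA A \<epsilon> * heat_kernel t (int x + int y + 1) \<le> 2 * (M * E)"
    using heat_kernel_nonneg [OF t] by (intro mult_mono) auto
  have T3: "(1 - muA A \<epsilon> powi (-2)) * (\<Sum>k. heat_kernel t (int x + int y + int k + 2) * muA A \<epsilon> ^ (k + 2))
      \<le> 6 * \<bar>A\<bar> * (M * E)"
  proof (rule robin_tail_le [OF \<epsilon>])
    show "0 \<le> heat_kernel t (int x + int y + int k + 2)" for k
      by (rule heat_kernel_nonneg [OF t])
    show "heat_kernel t (int x + int y + int k + 2) \<le> M * E * exp (- \<delta>) ^ k" for k
      using decay [of "real k" "int x + int y + int k + 2"]
      by (simp add: exp_of_nat_mult [symmetric] mult_ac)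
    show "0 \<le> exp (- \<delta>)" "exp (- \<delta>) \<le> exp (- (\<bar>A\<bar> + 1) * \<epsilon>)"
      using \<delta> by (simp_all add: algebra_simps)
  qed
  have "robin_kernel A \<epsilon> t x y
      = heat_kernel t (int x - int y) + muA A \<epsilon> * heat_kernel t (int x + int y + 1)
        + (1 - muA A \<epsilon> powi (-2)) * (\<Sum>k. heat_kernel t (int x + int y + int k + 2) * muA A \<epsilon> ^ (k + 2))"
    unfolding robin_kernel_def ..
  also have "\<dots> \<le> M * E + 2 * (M * E) + 6 * \<bar>A\<bar> * (M * E)"
    using T1 T2 T3 by linarith
  finally show ?thesis
    unfolding E_def by (simp add: algebra_simps)
qed

lemma le_sqrt_mult_min1_invsqrt:
  fixes \<epsilon> T t :: real
  assumes "0 < \<epsilon>" "\<epsilon> \<le> sqrt T" "t \<le> T / \<epsilon>^2"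
  shows "\<epsilon> \<le> sqrt T * min1_invsqrt t"
proof (cases "t \<le> 1")
  case True
  then show ?thesis
    using assms unfolding min1_invsqrt_def by simp
next
  case False
  have "\<epsilon>^2 * t \<le> T"
    using assms by (simp add: field_simps)
  then have "\<epsilon> * sqrt t \<le> sqrt T"
    using assms(1) real_sqrt_le_mono by (fastforce simp: real_sqrt_mult)
  then show ?thesis
    using False unfolding min1_invsqrt_def by (simp add: field_simps)
qed

lemma robin_kernel_le_min1_invsqrt:
  fixes A T b K \<epsilon> t :: real
  assumes b: "0 \<le> b" and \<epsilon>: "0 < \<epsilon>" "\<epsilon> \<le> 1" "\<epsilon> \<le> sqrt T" "\<bar>A\<bar> * \<epsilon> \<le> 1 / 2"
    and t: "0 \<le> t" "t \<le> T / \<epsilon>\<^sup>2"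
    and hk: "\<And>z. heat_kernel t z
               \<le> K * min1_invsqrt t * exp (- (b + sqrt T * (\<bar>A\<bar> + 1)) * min1_invsqrt t * \<bar>real_of_int z\<bar>)"
  shows "robin_kernel A \<epsilon> t x y
           \<le> (3 + 6 * \<bar>A\<bar>) * K * min1_invsqrt t * exp (- b * \<bar>real x - real y\<bar> * min1_invsqrt t)"
proof -
  define m where "m = min1_invsqrt t"
  have "\<epsilon> \<le> sqrt T * m"
    using \<epsilon> t unfolding m_def by (intro le_sqrt_mult_min1_invsqrt) auto
  from mult_left_mono [OF this, of "\<bar>A\<bar> + 1"]
  have "(\<bar>A\<bar> + 1) * \<epsilon> \<le> sqrt T * (\<bar>A\<bar> + 1) * m"
    by (simp add: mult_ac)
  moreover have "0 \<le> b * m"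
    using b by (simp add: m_def min1_invsqrt_def)
  moreover have "heat_kernel t z \<le> (K * m) * exp (- (b * m + sqrt T * (\<bar>A\<bar> + 1) * m) * \<bar>real_of_int z\<bar>)" for z
    using hk [of z] unfolding m_def by (simp add: algebra_simps)
  ultimately have "robin_kernel A \<epsilon> t x y \<le> (3 + 6 * \<bar>A\<bar>) * (K * m) * exp (- (b * m) * \<bar>real x - real y\<bar>)"
    using t(1) \<epsilon> by (intro robin_kernel_le) auto
  then show ?thesis
    unfolding m_def by (simp add: mult_ac)
qed

theorem mainTheorem4:
  fixes A T b :: real
  assumes "T > 0" and "b \<ge> 0"
  shows "\<exists>C. \<exists>\<epsilon>0 > 0. \<forall>\<epsilon>. 0 < \<epsilon> \<and> \<epsilon> < \<epsilon>0 \<longrightarrow>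
           (\<forall>t x y. 0 \<le> t \<and> t \<le> T / \<epsilon>\<^sup>2 \<longrightarrow>
              robin_kernel A \<epsilon> t x y
                \<le> C * min1_invsqrt t * exp (- b * \<bar>real x - real y\<bar> * min1_invsqrt t))"
proof -
  obtain K where K: "\<And>t z. 0 \<le> t \<Longrightarrow> heat_kernel t z
      \<le> K * min1_invsqrt t * exp (- (b + sqrt T * (\<bar>A\<bar> + 1)) * min1_invsqrt t * \<bar>real_of_int z\<bar>)"
    using heat_kernel_le_scaled_exp_decay [of "b + sqrt T * (\<bar>A\<bar> + 1)"] assms by auto
  define \<epsilon>0 where "\<epsilon>0 = min (min 1 (sqrt T)) (1 / (2 * \<bar>A\<bar> + 2))"
  have "robin_kernel A \<epsilon> t x y
      \<le> (3 + 6 * \<bar>A\<bar>) * K * min1_invsqrt t * exp (- b * \<bar>real x - real y\<bar> * min1_invsqrt t)"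
    if \<epsilon>: "0 < \<epsilon>" "\<epsilon> < \<epsilon>0" and t: "0 \<le> t" "t \<le> T / \<epsilon>\<^sup>2" for \<epsilon> t x y
  proof (rule robin_kernel_le_min1_invsqrt [OF assms(2) \<epsilon>(1) _ _ _ t K [OF t(1)]])
    have "\<epsilon> * (2 * \<bar>A\<bar> + 2) \<le> 1"
      using \<epsilon> unfolding \<epsilon>0_def by (simp add: field_simps)
    then show "\<bar>A\<bar> * \<epsilon> \<le> 1 / 2"
      using \<epsilon>(1) by (simp add: algebra_simps)
  qed (use \<epsilon> in \<open>simp_all add: \<epsilon>0_def\<close>)
  moreover have "0 < \<epsilon>0"
    unfolding \<epsilon>0_def using assms by simp
  ultimately show ?thesis
    by blast
qed

end
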